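(* Let $S$ be a commutative semiring and $\mathcal G$ an ample groupoid. Define the relation $\equiv$ on $A_S(\mathcal G)$ by $f\equiv g$ iff $f(\alpha)=g(\alpha)$ for all $\alpha\in\mathcal G$ with $s(\alpha),r(\alpha)\in\mathcal T$. Then $\equiv$ is a congruence on $A_S(\mathcal G)$ (and it is moreover compatible with $S$-scalar multiplication).
   Context: A commutative semiring has commutative monoid addition (neutral $0$), commutative associative multiplication with $1$, distributivity and absorbing $0$. An ample groupoid is a topological groupoid whose unit space $\mathcal G^{(0)}$ is locally compact Hausdorff and totally disconnected and whose source and range maps $s,r$ are local homeomorphisms. $\mathcal T=\{u\in\mathcal G^{(0)}:\{\gamma\in\mathcal G: s(\gamma)=r(\gamma)=u\}=\{u\}\}$ is the set of units with trivial isotropy group. The Steinberg algebra $A_S(\mathcal G)$ is the set of functions $\mathcal G\to S$ of the form $\sum_{U\in F}s_U1_U$ with $F$ a finite set of compact open bisections (subsets on which $s,r$ are homeomorphisms onto their images), with pointwise addition and convolution $(f*g)(\gamma)=\sum_{\alpha\beta=\gamma}f(\alpha)g(\beta)$. A congruence on a hemiring $R$ is an equivalence relation $\sim$ such that $r\sim s$ implies $t+r\sim t+s$, $tr\sim ts$, $rt\sim st$ for all $t\in R$. *)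

theory Defs
  imports "HOL-Analysis.Analysis"
begin

text \<open>Units are identified with identity arrows, so the unit space is s ` G.\<close>
definition groupoid ::
  "'g set \<Rightarrow> ('g \<Rightarrow> 'g) \<Rightarrow> ('g \<Rightarrow> 'g) \<Rightarrow> ('g \<Rightarrow> 'g \<Rightarrow> 'g) \<Rightarrow> ('g \<Rightarrow> 'g) \<Rightarrow> bool" where
  "groupoid G s r m i \<longleftrightarrow>
     (\<forall>a\<in>G. s a \<in> G \<and> r a \<in> G \<and> i a \<in> G) \<and>
     (\<forall>a\<in>G. s (s a) = s a \<and> r (s a) = s a \<and> s (r a) = r a \<and> r (r a) = r a) \<and>
     (\<forall>a\<in>G. \<forall>b\<in>G. s a = r b \<longrightarrow> m a b \<in> G \<and> s (m a b) = s b \<and> r (m a b) = r a) \<and>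
     (\<forall>a\<in>G. \<forall>b\<in>G. \<forall>c\<in>G. s a = r b \<and> s b = r c \<longrightarrow> m (m a b) c = m a (m b c)) \<and>
     (\<forall>a\<in>G. m (r a) a = a \<and> m a (s a) = a) \<and>
     (\<forall>a\<in>G. s (i a) = r a \<and> r (i a) = s a \<and> m a (i a) = r a \<and> m (i a) a = s a)"

definition unit_space :: "'g set \<Rightarrow> ('g \<Rightarrow> 'g) \<Rightarrow> 'g set" where
  "unit_space G s = s ` G"

definition composable_pairs :: "'g set \<Rightarrow> ('g \<Rightarrow> 'g) \<Rightarrow> ('g \<Rightarrow> 'g) \<Rightarrow> ('g \<times> 'g) set" where
  "composable_pairs G s r = {(a, b). a \<in> G \<and> b \<in> G \<and> s a = r b}"

definition topological_groupoid ::
  "'g topology \<Rightarrow> 'g set \<Rightarrow> ('g \<Rightarrow> 'g) \<Rightarrow> ('g \<Rightarrow> 'g) \<Rightarrow> ('g \<Rightarrow> 'g \<Rightarrow> 'g) \<Rightarrow> ('g \<Rightarrow> 'g) \<Rightarrow> bool" where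
  "topological_groupoid X G s r m i \<longleftrightarrow>
     groupoid G s r m i \<and> topspace X = G \<and>
     continuous_map (subtopology (prod_topology X X) (composable_pairs G s r)) X
       (\<lambda>(a, b). m a b) \<and>
     continuous_map X X i"

definition totally_disconnected_space :: "'a topology \<Rightarrow> bool" where
  "totally_disconnected_space X \<longleftrightarrow>
     (\<forall>C. connectedin X C \<longrightarrow> (\<exists>x. C \<subseteq> {x}))"

definition local_homeomorphism_map :: "'a topology \<Rightarrow> 'b topology \<Rightarrow> ('a \<Rightarrow> 'b) \<Rightarrow> bool" where
  "local_homeomorphism_map X Y f \<longleftrightarrow>
     f ` topspace X \<subseteq> topspace Y \<and>
     (\<forall>x\<in>topspace X. \<exists>U. openin X U \<and> x \<in> U \<and> openin Y (f ` U) \<and>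
        homeomorphic_map (subtopology X U) (subtopology Y (f ` U)) f)"

definition ample_groupoid ::
  "'g topology \<Rightarrow> 'g set \<Rightarrow> ('g \<Rightarrow> 'g) \<Rightarrow> ('g \<Rightarrow> 'g) \<Rightarrow> ('g \<Rightarrow> 'g \<Rightarrow> 'g) \<Rightarrow> ('g \<Rightarrow> 'g) \<Rightarrow> bool" where
  "ample_groupoid X G s r m i \<longleftrightarrow>
     topological_groupoid X G s r m i \<and>
     locally_compact_space (subtopology X (unit_space G s)) \<and>
     Hausdorff_space (subtopology X (unit_space G s)) \<and>
     totally_disconnected_space (subtopology X (unit_space G s)) \<and>
     local_homeomorphism_map X (subtopology X (unit_space G s)) s \<and>
     local_homeomorphism_map X (subtopology X (unit_space G s)) r"

definition trivial_isotropy_units :: "'g set \<Rightarrow> ('g \<Rightarrow> 'g) \<Rightarrow> ('g \<Rightarrow> 'g) \<Rightarrow> 'g set" where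
  "trivial_isotropy_units G s r =
     {u \<in> unit_space G s. {\<gamma> \<in> G. s \<gamma> = u \<and> r \<gamma> = u} = {u}}"

definition bisection :: "'g topology \<Rightarrow> 'g set \<Rightarrow> ('g \<Rightarrow> 'g) \<Rightarrow> ('g \<Rightarrow> 'g) \<Rightarrow> 'g set \<Rightarrow> bool" where
  "bisection X G s r U \<longleftrightarrow> U \<subseteq> G \<and>
     homeomorphic_map (subtopology X U) (subtopology X (s ` U)) s \<and>
     homeomorphic_map (subtopology X U) (subtopology X (r ` U)) r"

definition compact_open_bisection ::
  "'g topology \<Rightarrow> 'g set \<Rightarrow> ('g \<Rightarrow> 'g) \<Rightarrow> ('g \<Rightarrow> 'g) \<Rightarrow> 'g set \<Rightarrow> bool" where
  "compact_open_bisection X G s r U \<longleftrightarrow>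
     openin X U \<and> compactin X U \<and> bisection X G s r U"

text \<open>Elements of the Steinberg algebra: functions G -> S (extended by 0 off G)
 of the form sum of c_U 1_U over a finite set F of compact open bisections.\<close>
definition steinberg_algebra ::
  "'g topology \<Rightarrow> 'g set \<Rightarrow> ('g \<Rightarrow> 'g) \<Rightarrow> ('g \<Rightarrow> 'g) \<Rightarrow> ('g \<Rightarrow> 'a::comm_semiring_1) set" where
  "steinberg_algebra X G s r =
     {f. \<exists>F c. finite F \<and> (\<forall>U\<in>F. compact_open_bisection X G s r U) \<and>
            f = (\<lambda>\<gamma>. \<Sum>U\<in>F. if \<gamma> \<in> U then c U else 0)}"

text \<open>Convolution: (f*g)(gamma) = sum over alpha beta = gamma of f(alpha) g(beta);
 terms with f(alpha) = 0 or g(beta) = 0 are dropped (they contribute 0),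
 so the sum is finite for Steinberg algebra elements.\<close>
definition convolution ::
  "'g set \<Rightarrow> ('g \<Rightarrow> 'g) \<Rightarrow> ('g \<Rightarrow> 'g) \<Rightarrow> ('g \<Rightarrow> 'g \<Rightarrow> 'g) \<Rightarrow>
   ('g \<Rightarrow> 'a::comm_semiring_1) \<Rightarrow> ('g \<Rightarrow> 'a) \<Rightarrow> 'g \<Rightarrow> 'a" where
  "convolution G s r m f g \<gamma> =
     (\<Sum>(\<alpha>, \<beta>) \<in> {(\<alpha>, \<beta>). (\<alpha>, \<beta>) \<in> composable_pairs G s r \<and> m \<alpha> \<beta> = \<gamma> \<and>
                         f \<alpha> \<noteq> 0 \<and> g \<beta> \<noteq> 0}. f \<alpha> * g \<beta>)"

definition hemiring_congruence ::
  "'b set \<Rightarrow> ('b \<Rightarrow> 'b \<Rightarrow> 'b) \<Rightarrow> ('b \<Rightarrow> 'b \<Rightarrow> 'b) \<Rightarrow> ('b \<times> 'b) set \<Rightarrow> bool" where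
  "hemiring_congruence A p t R \<longleftrightarrow> equiv A R \<and>
     (\<forall>x y z. (x, y) \<in> R \<and> z \<in> A \<longrightarrow>
        (p z x, p z y) \<in> R \<and> (t z x, t z y) \<in> R \<and> (t x z, t y z) \<in> R)"

definition trivial_isotropy_rel ::
  "'g topology \<Rightarrow> 'g set \<Rightarrow> ('g \<Rightarrow> 'g) \<Rightarrow> ('g \<Rightarrow> 'g) \<Rightarrow> (('g \<Rightarrow> 'a::comm_semiring_1) \<times> ('g \<Rightarrow> 'a)) set" where
  "trivial_isotropy_rel X G s r =
     {(f, g). f \<in> steinberg_algebra X G s r \<and> g \<in> steinberg_algebra X G s r \<and>
        (\<forall>\<alpha>\<in>G. s \<alpha> \<in> trivial_isotropy_units G s r \<and> r \<alpha> \<in> trivial_isotropy_units G s r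
                \<longrightarrow> f \<alpha> = g \<alpha>)}"

end

theory Submission
  imports Defs
begin

text \<open>
  The relation lives on the Steinberg algebra, so closure of the algebra under convolution has to
  be shown first. For compact open bisections \<open>U\<close>, \<open>V\<close> the convolution of
  \<open>1\<^sub>U\<close> and \<open>1\<^sub>V\<close> is \<open>1\<^sub>U\<^sub>V\<close>, because \<open>r\<close> is injective on \<open>U\<close>
  and so every arrow of \<open>UV\<close> factors uniquely through \<open>U \<times> V\<close>; and \<open>UV\<close> is again a
  compact open bisection: it is the continuous image of the compact set of composable pairs in
  \<open>U \<times> V\<close> (closed since the unit space is Hausdorff), it is the preimage of \<open>V\<close> under
  \<open>\<gamma> \<mapsto> (\<rho> (r \<gamma>))\<inverse> \<gamma>\<close> with \<open>\<rho>\<close> the inverse of \<open>r\<close> on \<open>U\<close>, and \<open>s\<close> has the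
  continuous inverse \<open>u \<mapsto> \<tau> (r (\<sigma> u)) \<sigma> u\<close> on it (\<open>r\<close> likewise, in the opposite groupoid).

  Compatibility rests on the fact that trivial isotropy is transported along arrows: conjugation
  by \<open>\<beta>\<close> identifies the isotropy groups at \<open>s \<beta>\<close> and \<open>r \<beta>\<close>. So both factors of a
  factorization \<open>\<alpha> \<beta> = \<gamma>\<close> of an arrow with ends in \<open>T\<close> have ends in \<open>T\<close>, and the
  value of \<open>f * g\<close> at \<open>\<gamma>\<close> only depends on \<open>f\<close> and \<open>g\<close> there.
\<close>

section \<open>Local homeomorphisms\<close>

lemma continuous_map_local_homeomorphism_map:
  assumes "local_homeomorphism_map X Y f"
  shows "continuous_map X Y f"
proof -
  obtain U where U: "\<And>x. x \<in> topspace X \<Longrightarrow> openin X (U x) \<and> x \<in> U x \<and>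
      homeomorphic_map (subtopology X (U x)) (subtopology Y (f ` U x)) f"
    using assms unfolding local_homeomorphism_map_def by metis
  show ?thesis
  proof (rule pasting_lemma[where I = "topspace X" and T = U and f = "\<lambda>_. f"])
    show "continuous_map (subtopology X (U x)) Y f" if "x \<in> topspace X" for x
      using U[OF that] homeomorphic_imp_continuous_map continuous_map_into_fulltopology by blast
    show "\<exists>j. j \<in> topspace X \<and> x \<in> U j \<and> f x = f x" if "x \<in> topspace X" for x
      using U[OF that] that by blast
  qed (use U in simp_all)
qed

lemma open_map_local_homeomorphism_map:
  assumes "local_homeomorphism_map X Y f"
  shows "open_map X Y f"
  unfolding open_map_def
proof (intro allI impI)
  fix V assume V: "openin X V"
  obtain U where U: "\<And>x. x \<in> topspace X \<Longrightarrow> openin X (U x) \<and> x \<in> U x \<and> openin Y (f ` U x) \<and>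
      homeomorphic_map (subtopology X (U x)) (subtopology Y (f ` U x)) f"
    using assms unfolding local_homeomorphism_map_def by metis
  have "openin Y (f ` (V \<inter> U x))" if "x \<in> V" for x
  proof -
    have x: "x \<in> topspace X" using V openin_subset that by blast
    have "open_map (subtopology X (U x)) Y f"
      using U[OF x] homeomorphic_imp_open_map open_map_from_open_subtopology by blast
    moreover have "openin (subtopology X (U x)) (V \<inter> U x)"
      using V by (auto simp: openin_subtopology)
    ultimately show ?thesis by (simp add: open_map_def)
  qed
  moreover have "f ` V = (\<Union>x\<in>V. f ` (V \<inter> U x))"
  proof (intro equalityI subsetI)
    fix y assume "y \<in> f ` V"
    then obtain x where "x \<in> V" "y = f x" by blast
    moreover have "x \<in> U x" using U openin_subset[OF V] \<open>x \<in> V\<close> by blast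
    ultimately show "y \<in> (\<Union>x\<in>V. f ` (V \<inter> U x))" by blast
  qed blast
  ultimately show "openin Y (f ` V)" by auto
qed

lemma homeomorphic_map_subtopology_inverse:
  assumes "homeomorphic_map (subtopology X U) (subtopology Y (f ` U)) f" and "U \<subseteq> topspace X"
  obtains g where "continuous_map (subtopology Y (f ` U)) (subtopology X U) g"
    "\<And>x. x \<in> U \<Longrightarrow> g (f x) = x" "\<And>y. y \<in> f ` U \<Longrightarrow> f (g y) = y"
proof -
  obtain g where g: "homeomorphic_maps (subtopology X U) (subtopology Y (f ` U)) f g"
    using assms(1) homeomorphic_map_maps by blast
  have X: "topspace (subtopology X U) = U"
    using assms(2) by (rule topspace_subtopology_subset)
  have Y: "topspace (subtopology Y (f ` U)) = f ` U"
    using homeomorphic_imp_surjective_map[OF assms(1)] unfolding X by (rule sym)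
  show ?thesis
    using g that unfolding homeomorphic_maps_def X Y by blast
qed

section \<open>Steinberg algebras\<close>

lemma bisection_opposite: "bisection X G r s U \<longleftrightarrow> bisection X G s r U"
  by (auto simp: bisection_def)

lemma steinberg_algebraI:
  fixes a :: "'k \<Rightarrow> 'a::comm_semiring_1" and W :: "'k \<Rightarrow> 'g set"
  assumes "finite K" and "\<And>k. k \<in> K \<Longrightarrow> compact_open_bisection X G s r (W k)"
  shows "(\<lambda>\<gamma>. \<Sum>k\<in>K. if \<gamma> \<in> W k then a k else 0) \<in> steinberg_algebra X G s r"
proof -
  define c where "c U = (\<Sum>k\<in>{k \<in> K. W k = U}. a k)" for U
  have "(\<Sum>k\<in>K. if \<gamma> \<in> W k then a k else 0) = (\<Sum>U\<in>W ` K. if \<gamma> \<in> U then c U else 0)" for \<gamma>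
  proof -
    have "(\<Sum>k\<in>K. if \<gamma> \<in> W k then a k else 0)
        = (\<Sum>U\<in>W ` K. \<Sum>k\<in>{k \<in> K. W k = U}. if \<gamma> \<in> W k then a k else 0)"
      using \<open>finite K\<close> by (rule sum.image_gen)
    also have "\<dots> = (\<Sum>U\<in>W ` K. if \<gamma> \<in> U then c U else 0)"
      unfolding c_def by (intro sum.cong refl) (simp add: sum.neutral)
    finally show ?thesis .
  qed
  moreover have "finite (W ` K)" "\<forall>U\<in>W ` K. compact_open_bisection X G s r U"
    using assms by auto
  ultimately show ?thesis unfolding steinberg_algebra_def by blast
qed

lemma steinberg_algebraE:
  assumes "f \<in> steinberg_algebra X G s r"
  obtains F c where "finite F" "\<And>U. U \<in> F \<Longrightarrow> compact_open_bisection X G s r U"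
    "f = (\<lambda>\<gamma>. \<Sum>U\<in>F. if \<gamma> \<in> U then c U else 0)"
proof -
  from assms obtain F c where "finite F" "\<forall>U\<in>F. compact_open_bisection X G s r U"
    "f = (\<lambda>\<gamma>. \<Sum>U\<in>F. if \<gamma> \<in> U then c U else 0)"
    unfolding steinberg_algebra_def by blast
  then show ?thesis using that by blast
qed

lemma steinberg_algebra_add:
  assumes "f \<in> steinberg_algebra X G s r" and "g \<in> steinberg_algebra X G s r"
  shows "(\<lambda>x. f x + g x) \<in> steinberg_algebra X G s r"
proof -
  obtain F c where F: "finite F" "\<And>U. U \<in> F \<Longrightarrow> compact_open_bisection X G s r U"
    and f: "f = (\<lambda>\<gamma>. \<Sum>U\<in>F. if \<gamma> \<in> U then c U else 0)"
    using steinberg_algebraE[OF assms(1)] by blast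
  obtain H d where H: "finite H" "\<And>U. U \<in> H \<Longrightarrow> compact_open_bisection X G s r U"
    and g: "g = (\<lambda>\<gamma>. \<Sum>U\<in>H. if \<gamma> \<in> U then d U else 0)"
    using steinberg_algebraE[OF assms(2)] by blast
  have "(\<lambda>x. f x + g x) =
      (\<lambda>\<gamma>. \<Sum>k\<in>F <+> H. if \<gamma> \<in> case_sum id id k then case_sum c d k else 0)"
    unfolding f g sum.Plus[OF F(1) H(1)] by (simp add: o_def cong: if_cong)
  also have "\<dots> \<in> steinberg_algebra X G s r"
    using F H by (intro steinberg_algebraI) auto
  finally show ?thesis .
qed

lemma steinberg_algebra_scale:
  fixes k :: "'a::comm_semiring_1"
  assumes "f \<in> steinberg_algebra X G s r"
  shows "(\<lambda>x. k * f x) \<in> steinberg_algebra X G s r"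
proof -
  obtain F c where F: "finite F" "\<And>U. U \<in> F \<Longrightarrow> compact_open_bisection X G s r U"
    and f: "f = (\<lambda>\<gamma>. \<Sum>U\<in>F. if \<gamma> \<in> U then c U else 0)"
    using steinberg_algebraE[OF assms] by blast
  have "(\<lambda>x. k * f x) = (\<lambda>\<gamma>. \<Sum>U\<in>F. if \<gamma> \<in> id U then k * c U else 0)"
    unfolding f by (simp add: sum_distrib_left if_distrib cong: if_cong)
  also have "\<dots> \<in> steinberg_algebra X G s r"
    using F by (intro steinberg_algebraI) auto
  finally show ?thesis .
qed

lemma trivial_isotropy_rel_scale:
  fixes c :: "'a::comm_semiring_1"
  assumes "(f, g) \<in> trivial_isotropy_rel X G s r"
  shows "(\<lambda>x. c * f x, \<lambda>x. c * g x) \<in> trivial_isotropy_rel X G s r"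
  using assms steinberg_algebra_scale[of f X G s r c] steinberg_algebra_scale[of g X G s r c]
  by (simp add: trivial_isotropy_rel_def)

lemma convolution_cong:
  assumes "\<And>a b. (a, b) \<in> composable_pairs G s r \<Longrightarrow> m a b = \<gamma> \<Longrightarrow> f a = f' a \<and> g b = g' b"
  shows "convolution G s r m f g \<gamma> = convolution G s r m f' g' \<gamma>"
proof -
  have eq: "{(a, b). (a, b) \<in> composable_pairs G s r \<and> m a b = \<gamma> \<and> f a \<noteq> 0 \<and> g b \<noteq> 0}
      = {(a, b). (a, b) \<in> composable_pairs G s r \<and> m a b = \<gamma> \<and> f' a \<noteq> 0 \<and> g' b \<noteq> 0}"
    using assms by auto
  show ?thesis
    unfolding convolution_def eq by (rule sum.cong[OF refl]) (use assms in auto)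
qed

section \<open>Groupoids\<close>

locale groupoid_struct =
  fixes G :: "'g set" and s r :: "'g \<Rightarrow> 'g" and m :: "'g \<Rightarrow> 'g \<Rightarrow> 'g" and i :: "'g \<Rightarrow> 'g"
  assumes groupoid: "groupoid G s r m i"
begin

lemma closed [simp]:
  "a \<in> G \<Longrightarrow> s a \<in> G" "a \<in> G \<Longrightarrow> r a \<in> G" "a \<in> G \<Longrightarrow> i a \<in> G"
  "a \<in> G \<Longrightarrow> b \<in> G \<Longrightarrow> s a = r b \<Longrightarrow> m a b \<in> G"
  using groupoid by (auto simp: groupoid_def)

lemma source_range_simps [simp]:
  "a \<in> G \<Longrightarrow> s (s a) = s a" "a \<in> G \<Longrightarrow> r (s a) = s a"
  "a \<in> G \<Longrightarrow> s (r a) = r a" "a \<in> G \<Longrightarrow> r (r a) = r a"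
  "a \<in> G \<Longrightarrow> b \<in> G \<Longrightarrow> s a = r b \<Longrightarrow> s (m a b) = s b"
  "a \<in> G \<Longrightarrow> b \<in> G \<Longrightarrow> s a = r b \<Longrightarrow> r (m a b) = r a"
  "a \<in> G \<Longrightarrow> s (i a) = r a" "a \<in> G \<Longrightarrow> r (i a) = s a"
  using groupoid by (auto simp: groupoid_def)

lemma mult_assoc:
  "a \<in> G \<Longrightarrow> b \<in> G \<Longrightarrow> c \<in> G \<Longrightarrow> s a = r b \<Longrightarrow> s b = r c \<Longrightarrow> m (m a b) c = m a (m b c)"
  using groupoid by (auto simp: groupoid_def)

lemma mult_units [simp]:
  "a \<in> G \<Longrightarrow> m (r a) a = a" "a \<in> G \<Longrightarrow> m a (s a) = a"
  "a \<in> G \<Longrightarrow> m a (i a) = r a" "a \<in> G \<Longrightarrow> m (i a) a = s a"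
  using groupoid by (auto simp: groupoid_def)

lemma inv_mult_cancel_left:
  assumes "a \<in> G" "b \<in> G" "s a = r b"
  shows "m (i a) (m a b) = b"
  using assms mult_assoc[of "i a" a b] by simp

lemma opposite_groupoid: "groupoid G r s (\<lambda>a b. m b a) i"
  unfolding groupoid_def
proof (intro conjI ballI impI)
  fix a b c assume "a \<in> G" "b \<in> G" "c \<in> G" "r a = s b \<and> r b = s c"
  then show "m c (m b a) = m (m c b) a" using mult_assoc[of c b a] by simp
qed simp_all

lemma unit_space_range: "unit_space G r = unit_space G s"
  unfolding unit_space_def
proof (intro equalityI image_subsetI)
  fix a assume "a \<in> G"
  then show "r a \<in> s ` G" "s a \<in> r ` G"
    by (intro image_eqI[of _ s "r a"] image_eqI[of _ r "s a"]; simp)+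
qed

abbreviation T where "T \<equiv> trivial_isotropy_units G s r"

lemma trivial_isotropy_source_if_range:
  assumes b: "\<beta> \<in> G" and rT: "r \<beta> \<in> T"
  shows "s \<beta> \<in> T"
proof -
  have loops_r: "\<gamma> = r \<beta>" if "\<gamma> \<in> G" "s \<gamma> = r \<beta>" "r \<gamma> = r \<beta>" for \<gamma>
    using rT that unfolding trivial_isotropy_units_def by blast
  have loops_s: "\<gamma> = s \<beta>" if g: "\<gamma> \<in> G" "s \<gamma> = s \<beta>" "r \<gamma> = s \<beta>" for \<gamma>
  proof -
    define \<delta> where "\<delta> = m \<gamma> (i \<beta>)"
    have \<delta>: "\<delta> \<in> G" "s \<delta> = r \<beta>" "r \<delta> = s \<beta>"
      using b g by (simp_all add: \<delta>_def)
    have "m \<beta> \<delta> = r \<beta>"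
      by (rule loops_r) (use b \<delta> in simp_all)
    then have "\<delta> = m (i \<beta>) (r \<beta>)"
      using inv_mult_cancel_left[of \<beta> \<delta>] b \<delta> by simp
    also have "\<dots> = i \<beta>"
      using mult_units(2)[of "i \<beta>"] b by simp
    finally have "m \<delta> \<beta> = s \<beta>"
      using b by simp
    moreover have "m \<delta> \<beta> = \<gamma>"
      unfolding \<delta>_def using b g mult_assoc[of \<gamma> "i \<beta>" \<beta>] mult_units(2)[of \<gamma>] by simp
    ultimately show ?thesis by simp
  qed
  have "{\<gamma> \<in> G. s \<gamma> = s \<beta> \<and> r \<gamma> = s \<beta>} = {s \<beta>}"
  proof
    show "{\<gamma> \<in> G. s \<gamma> = s \<beta> \<and> r \<gamma> = s \<beta>} \<subseteq> {s \<beta>}"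
      using loops_s by blast
    show "{s \<beta>} \<subseteq> {\<gamma> \<in> G. s \<gamma> = s \<beta> \<and> r \<gamma> = s \<beta>}"
      using b by simp
  qed
  moreover have "s \<beta> \<in> unit_space G s"
    using b by (simp add: unit_space_def)
  ultimately show ?thesis
    by (simp add: trivial_isotropy_units_def)
qed

lemma trivial_isotropy_source_iff_range:
  assumes "\<beta> \<in> G"
  shows "s \<beta> \<in> T \<longleftrightarrow> r \<beta> \<in> T"
  using assms trivial_isotropy_source_if_range[of "i \<beta>"] trivial_isotropy_source_if_range[of \<beta>]
  by (metis closed(3) source_range_simps(7,8))

definition mult_set :: "'g set \<Rightarrow> 'g set \<Rightarrow> 'g set" where
  "mult_set U V = (\<lambda>(a, b). m a b) ` (composable_pairs G s r \<inter> U \<times> V)"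

definition factorizations :: "'g \<Rightarrow> ('g \<times> 'g) set" where
  "factorizations \<gamma> = {(a, b) \<in> composable_pairs G s r. m a b = \<gamma>}"

lemma mult_setI: "a \<in> U \<Longrightarrow> b \<in> V \<Longrightarrow> a \<in> G \<Longrightarrow> b \<in> G \<Longrightarrow> s a = r b \<Longrightarrow> m a b \<in> mult_set U V"
  unfolding mult_set_def composable_pairs_def by (auto intro: rev_image_eqI)

lemma mult_setE:
  assumes "\<gamma> \<in> mult_set U V"
  obtains a b where "a \<in> U" "b \<in> V" "a \<in> G" "b \<in> G" "s a = r b" "\<gamma> = m a b"
  using assms unfolding mult_set_def composable_pairs_def by auto

lemma mult_set_iff_factorizations: "\<gamma> \<in> mult_set U V \<longleftrightarrow> factorizations \<gamma> \<inter> U \<times> V \<noteq> {}"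
  unfolding mult_set_def factorizations_def by force

lemma mult_set_subset: "mult_set U V \<subseteq> G"
  unfolding mult_set_def composable_pairs_def by auto

lemma factorizations_unique:
  assumes "inj_on r U" and "p \<in> factorizations \<gamma> \<inter> U \<times> B" and "q \<in> factorizations \<gamma> \<inter> U \<times> B"
  shows "p = q"
proof -
  obtain a b a' b' where pq: "p = (a, b)" "q = (a', b')" by fastforce
  have ab: "a \<in> G" "b \<in> G" "s a = r b" "m a b = \<gamma>" "a \<in> U"
    and ab': "a' \<in> G" "b' \<in> G" "s a' = r b'" "m a' b' = \<gamma>" "a' \<in> U"
    using assms(2,3) by (auto simp: pq factorizations_def composable_pairs_def)
  have "r a = r a'"
    using ab ab' source_range_simps(6) by metis
  then have "a = a'"
    using inj_onD[OF assms(1) _ ab(5) ab'(5)] by blast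
  moreover have "b = b'"
    using inv_mult_cancel_left[OF ab(1-3)] inv_mult_cancel_left[OF ab'(1-3)] ab(4) ab'(4) \<open>a = a'\<close>
    by metis
  ultimately show ?thesis by (simp add: pq)
qed

lemma factorizations_eq_singleton:
  assumes "inj_on r U" and "p \<in> factorizations \<gamma> \<inter> U \<times> B"
  shows "factorizations \<gamma> \<inter> U \<times> B = {p}"
  using assms factorizations_unique by blast

lemma finite_factorizations:
  assumes "inj_on r U"
  shows "finite (factorizations \<gamma> \<inter> U \<times> B)"
  using factorizations_eq_singleton[OF assms] by (metis finite.emptyI finite.insertI equals0I)

lemma sum_factorizations_mult_set:
  assumes "inj_on r U"
  shows "(\<Sum>p\<in>factorizations \<gamma> \<inter> U \<times> V. c) = (if \<gamma> \<in> mult_set U V then c else 0)"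
proof (cases "\<gamma> \<in> mult_set U V")
  case True
  then obtain p where "p \<in> factorizations \<gamma> \<inter> U \<times> V"
    unfolding mult_set_iff_factorizations by blast
  then show ?thesis
    using True factorizations_eq_singleton[OF assms] by simp
next
  case False
  then show ?thesis unfolding mult_set_iff_factorizations by simp
qed

lemma convolution_eq_sum_factorizations:
  assumes "finite (factorizations \<gamma> \<inter> A \<times> B)"
    and "\<And>a. a \<notin> A \<Longrightarrow> f a = 0" and "\<And>b. b \<notin> B \<Longrightarrow> g b = 0"
  shows "convolution G s r m f g \<gamma> = (\<Sum>p\<in>factorizations \<gamma> \<inter> A \<times> B. f (fst p) * g (snd p))"
proof -
  have "convolution G s r m f g \<gamma> = (\<Sum>p\<in>{p \<in> factorizations \<gamma>. f (fst p) \<noteq> 0 \<and> g (snd p) \<noteq> 0}. f (fst p) * g (snd p))"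
    unfolding convolution_def factorizations_def by (simp add: case_prod_unfold)
  also have "\<dots> = (\<Sum>p\<in>factorizations \<gamma> \<inter> A \<times> B. f (fst p) * g (snd p))"
  proof (intro sum.mono_neutral_left assms(1))
    show "{p \<in> factorizations \<gamma>. f (fst p) \<noteq> 0 \<and> g (snd p) \<noteq> 0} \<subseteq> factorizations \<gamma> \<inter> A \<times> B"
      using assms(2,3) by (auto simp: mem_Times_iff) blast+
  qed auto
  finally show ?thesis .
qed

lemma convolution_indicator_sums:
  fixes c d :: "'g set \<Rightarrow> 'a::comm_semiring_1"
  assumes F: "finite F" and H: "finite H" and inj: "\<And>U. U \<in> F \<Longrightarrow> inj_on r U"
  shows "convolution G s r m (\<lambda>\<gamma>. \<Sum>U\<in>F. if \<gamma> \<in> U then c U else 0)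
            (\<lambda>\<gamma>. \<Sum>V\<in>H. if \<gamma> \<in> V then d V else 0) \<gamma>
       = (\<Sum>(U, V)\<in>F \<times> H. if \<gamma> \<in> mult_set U V then c U * d V else 0)"
proof -
  let ?P = "factorizations \<gamma> \<inter> \<Union>F \<times> \<Union>H"
  have "?P \<subseteq> (\<Union>U\<in>F. factorizations \<gamma> \<inter> U \<times> \<Union>H)" by blast
  then have fin: "finite ?P"
    by (rule finite_subset) (intro finite_UN_I F finite_factorizations inj)
  have "convolution G s r m (\<lambda>\<gamma>. \<Sum>U\<in>F. if \<gamma> \<in> U then c U else 0)
            (\<lambda>\<gamma>. \<Sum>V\<in>H. if \<gamma> \<in> V then d V else 0) \<gamma>
      = (\<Sum>p\<in>?P. (\<Sum>U\<in>F. if fst p \<in> U then c U else 0) * (\<Sum>V\<in>H. if snd p \<in> V then d V else 0))"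
    using fin by (intro convolution_eq_sum_factorizations) (auto intro!: sum.neutral)
  also have "\<dots> = (\<Sum>p\<in>?P. \<Sum>(U, V)\<in>F \<times> H. if p \<in> U \<times> V then c U * d V else 0)"
  proof (intro sum.cong refl)
    fix p :: "'g \<times> 'g"
    have "(\<Sum>U\<in>F. if fst p \<in> U then c U else 0) * (\<Sum>V\<in>H. if snd p \<in> V then d V else 0)
        = (\<Sum>(U, V)\<in>F \<times> H. (if fst p \<in> U then c U else 0) * (if snd p \<in> V then d V else 0))"
      by (simp add: sum_product sum.cartesian_product)
    also have "\<dots> = (\<Sum>(U, V)\<in>F \<times> H. if p \<in> U \<times> V then c U * d V else 0)"
      by (intro sum.cong refl) (auto simp: mem_Times_iff)
    finally show "(\<Sum>U\<in>F. if fst p \<in> U then c U else 0) * (\<Sum>V\<in>H. if snd p \<in> V then d V else 0)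
        = (\<Sum>(U, V)\<in>F \<times> H. if p \<in> U \<times> V then c U * d V else 0)" .
  qed
  also have "\<dots> = (\<Sum>(U, V)\<in>F \<times> H. \<Sum>p\<in>?P. if p \<in> U \<times> V then c U * d V else 0)"
    by (subst sum.swap) (simp only: case_prod_unfold)
  also have "\<dots> = (\<Sum>(U, V)\<in>F \<times> H. \<Sum>p\<in>factorizations \<gamma> \<inter> U \<times> V. c U * d V)"
  proof (intro sum.cong refl, clarify)
    fix U V assume UV: "U \<in> F" "V \<in> H"
    have "{p \<in> ?P. p \<in> U \<times> V} = factorizations \<gamma> \<inter> U \<times> V" using UV by blast
    then show "(\<Sum>p\<in>?P. if p \<in> U \<times> V then c U * d V else 0) = (\<Sum>p\<in>factorizations \<gamma> \<inter> U \<times> V. c U * d V)"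
      using sum.inter_filter[OF fin, of "\<lambda>_. c U * d V" "\<lambda>p. p \<in> U \<times> V"] by simp
  qed
  also have "\<dots> = (\<Sum>(U, V)\<in>F \<times> H. if \<gamma> \<in> mult_set U V then c U * d V else 0)"
  proof (intro sum.cong refl, clarify)
    fix U V assume "U \<in> F" "V \<in> H"
    then show "(\<Sum>p\<in>factorizations \<gamma> \<inter> U \<times> V. c U * d V) = (if \<gamma> \<in> mult_set U V then c U * d V else 0)"
      using inj by (intro sum_factorizations_mult_set) simp
  qed
  finally show ?thesis .
qed

lemma mult_set_source_inverse:
  assumes \<sigma>: "\<And>x. x \<in> V \<Longrightarrow> \<sigma> (s x) = x" and \<tau>: "\<And>x. x \<in> U \<Longrightarrow> \<tau> (s x) = x"
    and "\<gamma> \<in> mult_set U V"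
  shows "\<sigma> (s \<gamma>) \<in> V" "s (\<sigma> (s \<gamma>)) = s \<gamma>" "r (\<sigma> (s \<gamma>)) \<in> s ` U"
    "m (\<tau> (r (\<sigma> (s \<gamma>)))) (\<sigma> (s \<gamma>)) = \<gamma>"
proof -
  obtain a b where ab: "a \<in> U" "b \<in> V" "a \<in> G" "b \<in> G" "s a = r b" "\<gamma> = m a b"
    using assms(3) by (rule mult_setE)
  have "\<sigma> (s \<gamma>) = b"
    using \<sigma>[OF ab(2)] ab by simp
  moreover have "\<tau> (r b) = a"
    using \<tau>[OF ab(1)] ab(5) by simp
  moreover have "r b \<in> s ` U"
    using imageI[OF ab(1), of s] ab(5) by simp
  ultimately show "\<sigma> (s \<gamma>) \<in> V" "s (\<sigma> (s \<gamma>)) = s \<gamma>" "r (\<sigma> (s \<gamma>)) \<in> s ` U"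
    "m (\<tau> (r (\<sigma> (s \<gamma>)))) (\<sigma> (s \<gamma>)) = \<gamma>"
    using ab by simp_all
qed

lemma mult_set_eq_preimage:
  assumes "U \<subseteq> G" and \<rho>: "\<And>x. x \<in> U \<Longrightarrow> \<rho> (r x) = x" "\<And>y. y \<in> r ` U \<Longrightarrow> r (\<rho> y) = y"
  shows "mult_set U V = {\<gamma> \<in> G. r \<gamma> \<in> r ` U \<and> m (i (\<rho> (r \<gamma>))) \<gamma> \<in> V}"
proof (intro equalityI subsetI)
  fix \<gamma> assume "\<gamma> \<in> mult_set U V"
  then obtain a b where ab: "a \<in> U" "b \<in> V" "a \<in> G" "b \<in> G" "s a = r b" "\<gamma> = m a b"
    by (rule mult_setE)
  have "r \<gamma> = r a" "\<gamma> \<in> G"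
    using ab by simp_all
  moreover have "m (i (\<rho> (r \<gamma>))) \<gamma> = b"
    using \<rho>(1)[OF ab(1)] inv_mult_cancel_left[OF ab(3-5)] ab(6) \<open>r \<gamma> = r a\<close> by simp
  ultimately show "\<gamma> \<in> {\<gamma> \<in> G. r \<gamma> \<in> r ` U \<and> m (i (\<rho> (r \<gamma>))) \<gamma> \<in> V}"
    using ab(1,2) by simp
next
  fix \<gamma> assume "\<gamma> \<in> {\<gamma> \<in> G. r \<gamma> \<in> r ` U \<and> m (i (\<rho> (r \<gamma>))) \<gamma> \<in> V}"
  then have \<gamma>: "\<gamma> \<in> G" "r \<gamma> \<in> r ` U" "m (i (\<rho> (r \<gamma>))) \<gamma> \<in> V"
    by simp_all
  define a where "a = \<rho> (r \<gamma>)"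
  have a: "a \<in> U" "a \<in> G" "r a = r \<gamma>"
    using \<gamma>(2) \<rho> assms(1) unfolding a_def by auto
  have "m a (m (i a) \<gamma>) = m (m a (i a)) \<gamma>"
    using mult_assoc[of a "i a" \<gamma>] a \<gamma>(1) by simp
  also have "\<dots> = \<gamma>"
    using a \<gamma>(1) by simp
  finally have "\<gamma> = m a (m (i a) \<gamma>)" ..
  moreover have "m (i a) \<gamma> \<in> G" "s a = r (m (i a) \<gamma>)"
    using a \<gamma>(1) by simp_all
  ultimately show "\<gamma> \<in> mult_set U V"
    using mult_setI[OF a(1) \<gamma>(3)[folded a_def] a(2)] by metis
qed

lemma convolution_cong_trivial_isotropy:
  assumes f: "\<And>\<alpha>. \<alpha> \<in> G \<Longrightarrow> s \<alpha> \<in> T \<Longrightarrow> r \<alpha> \<in> T \<Longrightarrow> f \<alpha> = f' \<alpha>"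
    and g: "\<And>\<alpha>. \<alpha> \<in> G \<Longrightarrow> s \<alpha> \<in> T \<Longrightarrow> r \<alpha> \<in> T \<Longrightarrow> g \<alpha> = g' \<alpha>"
    and \<gamma>: "s \<gamma> \<in> T" "r \<gamma> \<in> T"
  shows "convolution G s r m f g \<gamma> = convolution G s r m f' g' \<gamma>"
proof (rule convolution_cong)
  fix a b assume "(a, b) \<in> composable_pairs G s r" and "m a b = \<gamma>"
  then have ab: "a \<in> G" "b \<in> G" "s a = r b" "r a = r \<gamma>" "s b = s \<gamma>"
    by (auto simp: composable_pairs_def)
  then have "s a \<in> T"
    using \<gamma>(2) trivial_isotropy_source_iff_range[of a] by simp
  then show "f a = f' a \<and> g b = g' b"
    using f[of a] g[of b] ab \<gamma> by simp
qed

end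

section \<open>Etale groupoids\<close>

locale etale_groupoid = groupoid_struct G s r m i
  for G :: "'g set" and s r :: "'g \<Rightarrow> 'g" and m :: "'g \<Rightarrow> 'g \<Rightarrow> 'g" and i :: "'g \<Rightarrow> 'g" +
  fixes X :: "'g topology"
  assumes topspace [simp]: "topspace X = G"
    and continuous_mult:
      "continuous_map (subtopology (prod_topology X X) (composable_pairs G s r)) X (\<lambda>(a, b). m a b)"
    and continuous_inv: "continuous_map X X i"
    and Hausdorff_units: "Hausdorff_space (subtopology X (unit_space G s))"
    and local_homeomorphism_source: "local_homeomorphism_map X (subtopology X (unit_space G s)) s"
    and local_homeomorphism_range: "local_homeomorphism_map X (subtopology X (unit_space G s)) r"
begin

lemma continuous_source_units: "continuous_map X (subtopology X (unit_space G s)) s"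
  by (rule continuous_map_local_homeomorphism_map[OF local_homeomorphism_source])

lemma continuous_range_units: "continuous_map X (subtopology X (unit_space G s)) r"
  by (rule continuous_map_local_homeomorphism_map[OF local_homeomorphism_range])

lemma continuous_map_mult:
  assumes "continuous_map Z X f" and "continuous_map Z X g"
    and "\<And>z. z \<in> topspace Z \<Longrightarrow> s (f z) = r (g z)"
  shows "continuous_map Z X (\<lambda>z. m (f z) (g z))"
proof -
  have "continuous_map Z (subtopology (prod_topology X X) (composable_pairs G s r)) (\<lambda>z. (f z, g z))"
  proof (rule continuous_map_into_subtopology)
    show "continuous_map Z (prod_topology X X) (\<lambda>z. (f z, g z))"
      using assms(1,2) by (rule continuous_map_pairedI)
    show "(\<lambda>z. (f z, g z)) \<in> topspace Z \<rightarrow> composable_pairs G s r"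
      using assms continuous_map_image_subset_topspace
      by (fastforce simp: composable_pairs_def)
  qed
  from continuous_map_compose[OF this continuous_mult] show ?thesis by (simp add: o_def)
qed

lemma opposite: "etale_groupoid G r s (\<lambda>a b. m b a) i X"
proof (intro etale_groupoid.intro groupoid_struct.intro etale_groupoid_axioms.intro)
  let ?Z = "subtopology (prod_topology X X) (composable_pairs G r s)"
  have "continuous_map ?Z X (\<lambda>p. m (snd p) (fst p))"
  proof (rule continuous_map_mult)
    show "continuous_map ?Z X snd" "continuous_map ?Z X fst"
      by (intro continuous_map_from_subtopology continuous_map_snd continuous_map_fst)+
    show "s (snd p) = r (fst p)" if "p \<in> topspace ?Z" for p
      using that by (auto simp: composable_pairs_def)
  qed
  then show "continuous_map ?Z X (\<lambda>(a, b). m b a)"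
    by (simp add: case_prod_unfold)
qed (simp_all add: opposite_groupoid unit_space_range continuous_inv Hausdorff_units
      local_homeomorphism_source local_homeomorphism_range)

lemma mult_set_opposite: "groupoid_struct.mult_set G r s (\<lambda>a b. m b a) V U = mult_set U V"
proof -
  have "groupoid_struct.mult_set G r s (\<lambda>a b. m b a) V U
      = (\<lambda>(a, b). m a b) ` prod.swap ` (composable_pairs G r s \<inter> V \<times> U)"
    unfolding groupoid_struct.mult_set_def[OF groupoid_struct.intro[OF opposite_groupoid]] image_image
    by (simp add: case_prod_unfold)
  also have "prod.swap ` (composable_pairs G r s \<inter> V \<times> U) = composable_pairs G s r \<inter> U \<times> V"
    by (auto simp: composable_pairs_def)
  finally show ?thesis by (simp add: mult_set_def)
qed

lemma continuous_source: "continuous_map X X s"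
  using continuous_source_units continuous_map_into_fulltopology by blast

lemma continuous_range: "continuous_map X X r"
  using continuous_range_units continuous_map_into_fulltopology by blast

lemma bisection_source_inverse:
  assumes "bisection X G s r U"
  obtains \<sigma> where "continuous_map (subtopology X (s ` U)) (subtopology X U) \<sigma>"
    "\<And>x. x \<in> U \<Longrightarrow> \<sigma> (s x) = x" "\<And>y. y \<in> s ` U \<Longrightarrow> s (\<sigma> y) = y"
proof -
  have "homeomorphic_map (subtopology X U) (subtopology X (s ` U)) s" "U \<subseteq> topspace X"
    using assms by (simp_all add: bisection_def)
  from homeomorphic_map_subtopology_inverse[OF this] that show ?thesis by blast
qed

lemma inj_on_range_bisection:
  assumes "bisection X G s r U"
  shows "inj_on r U"
proof -
  have "homeomorphic_map (subtopology X U) (subtopology X (r ` U)) r" "U \<subseteq> topspace X"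
    using assms by (simp_all add: bisection_def)
  from homeomorphic_imp_injective_map[OF this(1)] this(2) show ?thesis
    by (simp add: Int_absorb1)
qed

lemma homeomorphic_map_source_mult_set:
  assumes U: "bisection X G s r U" and V: "bisection X G s r V"
  shows "homeomorphic_map (subtopology X (mult_set U V)) (subtopology X (s ` mult_set U V)) s"
proof -
  let ?P = "mult_set U V"
  obtain \<sigma> where \<sigma>: "continuous_map (subtopology X (s ` V)) (subtopology X V) \<sigma>"
    "\<And>x. x \<in> V \<Longrightarrow> \<sigma> (s x) = x" "\<And>y. y \<in> s ` V \<Longrightarrow> s (\<sigma> y) = y"
    using bisection_source_inverse[OF V] by blast
  obtain \<tau> where \<tau>: "continuous_map (subtopology X (s ` U)) (subtopology X U) \<tau>"
    "\<And>x. x \<in> U \<Longrightarrow> \<tau> (s x) = x" "\<And>y. y \<in> s ` U \<Longrightarrow> s (\<tau> y) = y"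
    using bisection_source_inverse[OF U] by blast
  define \<psi> where "\<psi> u = m (\<tau> (r (\<sigma> u))) (\<sigma> u)" for u
  note inverse = mult_set_source_inverse[OF \<sigma>(2) \<tau>(2)]
  have sP: "s ` ?P \<subseteq> s ` V"
    using inverse(1,2) by (metis image_eqI image_subsetI)
  have \<sigma>_cont: "continuous_map (subtopology X (s ` ?P)) X \<sigma>"
    using continuous_map_from_subtopology_mono[OF \<sigma>(1) sP] continuous_map_into_fulltopology by blast
  have "continuous_map (subtopology X (s ` ?P)) (subtopology X (s ` U)) (\<lambda>u. r (\<sigma> u))"
  proof (rule continuous_map_into_subtopology)
    show "continuous_map (subtopology X (s ` ?P)) X (\<lambda>u. r (\<sigma> u))"
      using continuous_map_compose[OF \<sigma>_cont continuous_range] by (simp add: o_def)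
    show "(\<lambda>u. r (\<sigma> u)) \<in> topspace (subtopology X (s ` ?P)) \<rightarrow> s ` U"
      using inverse(3) by auto
  qed
  from continuous_map_compose[OF this \<tau>(1)]
  have "continuous_map (subtopology X (s ` ?P)) X (\<lambda>u. \<tau> (r (\<sigma> u)))"
    using continuous_map_into_fulltopology by (auto simp: o_def)
  then have "continuous_map (subtopology X (s ` ?P)) X \<psi>"
    unfolding \<psi>_def using \<sigma>_cont
    by (rule continuous_map_mult) (use inverse(3) \<tau>(3) in auto)
  then have "continuous_map (subtopology X (s ` ?P)) (subtopology X ?P) \<psi>"
    using inverse(4) by (intro continuous_map_into_subtopology) (auto simp: \<psi>_def)
  moreover have "continuous_map (subtopology X ?P) (subtopology X (s ` ?P)) s"
    using continuous_map_from_subtopology[OF continuous_source]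
    by (intro continuous_map_into_subtopology) auto
  ultimately have "homeomorphic_maps (subtopology X ?P) (subtopology X (s ` ?P)) s \<psi>"
    unfolding homeomorphic_maps_def using inverse(4) by (auto simp: \<psi>_def)
  then show ?thesis
    unfolding homeomorphic_map_maps by blast
qed

lemma homeomorphic_map_range_mult_set:
  assumes "bisection X G s r U" and "bisection X G s r V"
  shows "homeomorphic_map (subtopology X (mult_set U V)) (subtopology X (r ` mult_set U V)) r"
proof -
  have "bisection X G r s V" "bisection X G r s U"
    using assms bisection_opposite by blast+
  from etale_groupoid.homeomorphic_map_source_mult_set[OF opposite this]
  show ?thesis unfolding mult_set_opposite .
qed

lemma openin_mult_set:
  assumes U: "bisection X G s r U" "openin X U" and V: "openin X V"
  shows "openin X (mult_set U V)"
proof -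
  have "bisection X G r s U"
    using U(1) bisection_opposite by blast
  then obtain \<rho> where \<rho>: "continuous_map (subtopology X (r ` U)) (subtopology X U) \<rho>"
    "\<And>x. x \<in> U \<Longrightarrow> \<rho> (r x) = x" "\<And>y. y \<in> r ` U \<Longrightarrow> r (\<rho> y) = y"
    using etale_groupoid.bisection_source_inverse[OF opposite] by blast
  have UG: "U \<subseteq> G"
    using U(1) by (simp add: bisection_def)
  define RU where "RU = {\<gamma> \<in> topspace X. r \<gamma> \<in> r ` U}"
  have "openin (subtopology X (unit_space G s)) (r ` U)"
    using open_map_local_homeomorphism_map[OF local_homeomorphism_range] U(2)
    by (simp add: open_map_def)
  then have RU_open: "openin X RU"
    unfolding RU_def by (rule openin_continuous_map_preimage[OF continuous_range_units])
  have r_cont: "continuous_map (subtopology X RU) (subtopology X (r ` U)) r"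
    using continuous_map_from_subtopology[OF continuous_range]
    by (rule continuous_map_into_subtopology) (auto simp: RU_def)
  have "continuous_map (subtopology X RU) X (\<lambda>\<gamma>. \<rho> (r \<gamma>))"
    using continuous_map_compose[OF r_cont \<rho>(1)] continuous_map_into_fulltopology
    by (auto simp: o_def)
  then have inv_cont: "continuous_map (subtopology X RU) X (\<lambda>\<gamma>. i (\<rho> (r \<gamma>)))"
    using continuous_map_compose[OF _ continuous_inv] by (auto simp: o_def)
  have \<rho>U: "\<rho> (r \<gamma>) \<in> G" "r (\<rho> (r \<gamma>)) = r \<gamma>" if \<gamma>: "\<gamma> \<in> topspace (subtopology X RU)" for \<gamma>
  proof -
    obtain x where "x \<in> U" "r \<gamma> = r x"
      using \<gamma> unfolding RU_def topspace_subtopology by blast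
    then show "\<rho> (r \<gamma>) \<in> G" "r (\<rho> (r \<gamma>)) = r \<gamma>"
      using \<rho>(2) UG by auto
  qed
  have \<phi>_cont: "continuous_map (subtopology X RU) X (\<lambda>\<gamma>. m (i (\<rho> (r \<gamma>))) \<gamma>)"
  proof (rule continuous_map_mult[OF inv_cont])
    show "continuous_map (subtopology X RU) X (\<lambda>\<gamma>. \<gamma>)"
      using continuous_map_from_subtopology[OF continuous_map_id] by (simp add: id_def)
  qed (simp add: \<rho>U)
  have eq: "mult_set U V = {\<gamma> \<in> topspace (subtopology X RU). m (i (\<rho> (r \<gamma>))) \<gamma> \<in> V}"
  proof -
    have "mult_set U V = {\<gamma> \<in> G. r \<gamma> \<in> r ` U \<and> m (i (\<rho> (r \<gamma>))) \<gamma> \<in> V}"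
      by (rule mult_set_eq_preimage[OF UG \<rho>(2,3)])
    moreover have "topspace (subtopology X RU) = {\<gamma> \<in> G. r \<gamma> \<in> r ` U}"
      by (auto simp: RU_def)
    ultimately show ?thesis
      by (simp add: conj_assoc)
  qed
  have "openin (subtopology X RU) (mult_set U V)"
    using openin_continuous_map_preimage[OF \<phi>_cont V] by (simp only: eq)
  then show ?thesis
    using RU_open openin_trans_full by blast
qed

lemma compactin_mult_set:
  assumes "compactin X U" and "compactin X V"
  shows "compactin X (mult_set U V)"
proof -
  let ?Z = "subtopology (prod_topology X X) (U \<times> V)"
  have UV: "U \<times> V \<subseteq> G \<times> G"
    using assms compactin_subset_topspace by fastforce
  have "closedin ?Z {p \<in> topspace ?Z. s (fst p) = r (snd p)}"
  proof (rule closedin_continuous_maps_eq[OF Hausdorff_units])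
    show "continuous_map ?Z (subtopology X (unit_space G s)) (\<lambda>p. s (fst p))"
      using continuous_map_compose[OF continuous_map_from_subtopology[OF continuous_map_fst] continuous_source_units]
      by (simp add: o_def)
    show "continuous_map ?Z (subtopology X (unit_space G s)) (\<lambda>p. r (snd p))"
      using continuous_map_compose[OF continuous_map_from_subtopology[OF continuous_map_snd] continuous_range_units]
      by (simp add: o_def)
  qed
  moreover have "compact_space ?Z"
    using assms by (intro compact_space_subtopology) (simp add: compactin_Times)
  ultimately have "compactin ?Z {p \<in> topspace ?Z. s (fst p) = r (snd p)}"
    by (rule closedin_compact_space[rotated])
  moreover have "{p \<in> topspace ?Z. s (fst p) = r (snd p)} = composable_pairs G s r \<inter> U \<times> V"
    using UV by (auto simp: composable_pairs_def)
  ultimately have "compactin (subtopology (prod_topology X X) (composable_pairs G s r))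
      (composable_pairs G s r \<inter> U \<times> V)"
    by (simp add: compactin_subtopology)
  from image_compactin[OF this continuous_mult] show ?thesis
    unfolding mult_set_def .
qed

lemma compact_open_bisection_mult_set:
  assumes "compact_open_bisection X G s r U" and "compact_open_bisection X G s r V"
  shows "compact_open_bisection X G s r (mult_set U V)"
  using assms mult_set_subset homeomorphic_map_source_mult_set homeomorphic_map_range_mult_set
    openin_mult_set compactin_mult_set
  by (simp add: compact_open_bisection_def bisection_def)

lemma steinberg_algebra_convolution:
  assumes "f \<in> steinberg_algebra X G s r" and "g \<in> steinberg_algebra X G s r"
  shows "convolution G s r m f g \<in> steinberg_algebra X G s r"
proof -
  obtain F c where F: "finite F" "\<And>U. U \<in> F \<Longrightarrow> compact_open_bisection X G s r U"
    and f: "f = (\<lambda>\<gamma>. \<Sum>U\<in>F. if \<gamma> \<in> U then c U else 0)"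
    using steinberg_algebraE[OF assms(1)] by blast
  obtain H d where H: "finite H" "\<And>U. U \<in> H \<Longrightarrow> compact_open_bisection X G s r U"
    and g: "g = (\<lambda>\<gamma>. \<Sum>U\<in>H. if \<gamma> \<in> U then d U else 0)"
    using steinberg_algebraE[OF assms(2)] by blast
  have "inj_on r U" if "U \<in> F" for U
    using F(2)[OF that] by (simp add: compact_open_bisection_def inj_on_range_bisection)
  then have "convolution G s r m f g
      = (\<lambda>\<gamma>. \<Sum>q\<in>F \<times> H. if \<gamma> \<in> mult_set (fst q) (snd q) then c (fst q) * d (snd q) else 0)"
    unfolding f g using F(1) H(1)
    by (intro ext) (simp add: convolution_indicator_sums case_prod_unfold)
  also have "\<dots> \<in> steinberg_algebra X G s r"
    using F H by (intro steinberg_algebraI compact_open_bisection_mult_set) auto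
  finally show ?thesis .
qed

lemma hemiring_congruence_trivial_isotropy_rel:
  "hemiring_congruence (steinberg_algebra X G s r :: ('g \<Rightarrow> 'a::comm_semiring_1) set)
     (\<lambda>f g x. f x + g x) (convolution G s r m) (trivial_isotropy_rel X G s r)"
proof -
  let ?A = "steinberg_algebra X G s r :: ('g \<Rightarrow> 'a) set"
  let ?R = "trivial_isotropy_rel X G s r :: (('g \<Rightarrow> 'a) \<times> ('g \<Rightarrow> 'a)) set"
  have "equiv ?A ?R"
    by (rule equivI) (auto simp: trivial_isotropy_rel_def refl_on_def sym_def trans_def)
  moreover have "(\<lambda>x. h x + f x, \<lambda>x. h x + g x) \<in> ?R \<and>
      (convolution G s r m h f, convolution G s r m h g) \<in> ?R \<and>
      (convolution G s r m f h, convolution G s r m g h) \<in> ?R"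
    if "(f, g) \<in> ?R" and h: "h \<in> ?A" for f g h
  proof -
    have f: "f \<in> ?A" and g: "g \<in> ?A"
      and fg: "\<And>\<alpha>. \<alpha> \<in> G \<Longrightarrow> s \<alpha> \<in> T \<Longrightarrow> r \<alpha> \<in> T \<Longrightarrow> f \<alpha> = g \<alpha>"
      using that(1) by (auto simp: trivial_isotropy_rel_def)
    have hh: "\<And>\<alpha>. \<alpha> \<in> G \<Longrightarrow> s \<alpha> \<in> T \<Longrightarrow> r \<alpha> \<in> T \<Longrightarrow> h \<alpha> = h \<alpha>"
      by (rule refl)
    show ?thesis
      unfolding trivial_isotropy_rel_def
      using steinberg_algebra_add[OF h f] steinberg_algebra_add[OF h g]
        steinberg_algebra_convolution[OF h f] steinberg_algebra_convolution[OF h g]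
        steinberg_algebra_convolution[OF f h] steinberg_algebra_convolution[OF g h]
        convolution_cong_trivial_isotropy[OF hh fg] convolution_cong_trivial_isotropy[OF fg hh] fg
      by simp
  qed
  ultimately show ?thesis
    unfolding hemiring_congruence_def by blast
qed

end

lemma ample_groupoid_imp_etale:
  assumes "ample_groupoid X G s r m i"
  shows "etale_groupoid G s r m i X"
  using assms unfolding ample_groupoid_def topological_groupoid_def
  by (intro etale_groupoid.intro groupoid_struct.intro etale_groupoid_axioms.intro) simp_all

theorem lemma3p5:
  fixes X :: "'g topology" and G :: "'g set" and s r :: "'g \<Rightarrow> 'g"
    and m :: "'g \<Rightarrow> 'g \<Rightarrow> 'g" and i :: "'g \<Rightarrow> 'g"
  assumes "ample_groupoid X G s r m i"
  shows "hemiring_congruence (steinberg_algebra X G s r :: ('g \<Rightarrow> 'a::comm_semiring_1) set)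
           (\<lambda>f g x. f x + g x) (convolution G s r m) (trivial_isotropy_rel X G s r)
         \<and> (\<forall>(c::'a) f g. (f, g) \<in> trivial_isotropy_rel X G s r \<longrightarrow>
              ((\<lambda>x. c * f x), (\<lambda>x. c * g x)) \<in> trivial_isotropy_rel X G s r)"
proof -
  interpret etale_groupoid G s r m i X
    using assms by (rule ample_groupoid_imp_etale)
  show ?thesis
    using hemiring_congruence_trivial_isotropy_rel trivial_isotropy_rel_scale by blast
qed

end
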